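(* Let $S\subseteq X$, let $\psi:S\to Z$ be $C$-convex, $x_0\in S$, and let $f=\psi^C$. Assume $C$ is polyhedral and that for every $x\in X$ and every $z^*\in C^-\setminus\{0\}$ the function $t\mapsto\varphi_{f,z^*}(x_0+t(x-x_0))$ (for $t\in[0,1]$, $+\infty$ otherwise) is lower semicontinuous at $t=0$. Then $x_0$ solves the set-valued Minty inequality for $f$, i.e. for all $x\in X$ with $f(x)\ne f(x_0)$ one has $f'(x,x_0-x)\not\subseteq 0^+f(x)$, if and only if $\psi(x_0)\in\operatorname{Eff}\psi[S]$.
   Context: $X$ is a real linear space, $Z$ a real locally convex Hausdorff space with dual $Z^*$, $C\subseteq Z$ a closed convex cone with $0\in C$ and $C^-=\{z^*\in Z^*: z^*(c)\le0\ \forall c\in C\}$, $C^-\setminus\{0\}\ne\emptyset$. $C$ is polyhedral if $C=\bigcap_{i=1}^n\{z: 0\le -m_i^*(z)\}$ for finitely many $m_i^*\in Z^*$. $\psi:S\to Z$ is $C$-convex if $S$ is convex and $(1-t)\psi(x_1)+t\psi(x_2)\in\psi(x_1+t(x_2-x_1))+C$ for all $x_1,x_2\in S$, $t\in(0,1)$. $f=\psi^C:X\to 2^Z$ is $f(x)=\psi(x)+C$ for $x\in S$ and $f(x)=\emptyset$ otherwise. $\psi(x_0)\in\operatorname{Eff}\psi[S]$ means: for all $y\in\psi[S]$, $\psi(x_0)\in y+C$ implies $\psi(x_0)\in y+(C\cap -C)$. For $A,B\subseteq Z$: $A\ominus B=\{z: B+\{z\}\subseteq A\}$; $0^+A=\{z:A+\{z\}\subseteq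 A\}$ for $A\neq\emptyset$, $0^+\emptyset=\emptyset$. $f'(x,u)=\bigcap_{t_0>0}\operatorname{cl}\operatorname{co}\bigcup_{0<t<t_0}\frac1t\big(f(x+tu)\ominus f(x)\big)$. $\varphi_{f,z^*}(x)=\inf\{-z^*(z): z\in f(x)\}$, i.e. $-z^*(\psi(x))$ on $S$ and $+\infty$ outside $S$. *)

theory Defs
  imports "HOL-Analysis.Analysis"
begin

definition locally_convex_tvs :: "('z::{real_vector, t2_space}) itself \<Rightarrow> bool" where
  "locally_convex_tvs _ \<longleftrightarrow>
     continuous_on UNIV (\<lambda>p::'z \<times> 'z. fst p + snd p) \<and>
     continuous_on UNIV (\<lambda>p::real \<times> 'z. scaleR (fst p) (snd p)) \<and>
     (\<forall>U::'z set. open U \<and> 0 \<in> U \<longrightarrow> (\<exists>V. open V \<and> convex V \<and> 0 \<in> V \<and> V \<subseteq> U))"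

definition dual_space :: "('z::{real_vector, topological_space} \<Rightarrow> real) set" where
  "dual_space = {g. linear g \<and> continuous_on UNIV g}"

definition polar_cone :: "('z::{real_vector, topological_space}) set \<Rightarrow> ('z \<Rightarrow> real) set" where
  "polar_cone C = {g \<in> dual_space. \<forall>c\<in>C. g c \<le> 0}"

definition polyhedral_cone :: "('z::{real_vector, topological_space}) set \<Rightarrow> bool" where
  "polyhedral_cone C \<longleftrightarrow> (\<exists>M. finite M \<and> M \<subseteq> dual_space \<and> C = (\<Inter>m\<in>M. {z. 0 \<le> - m z}))"

definition C_convex :: "('z::real_vector) set \<Rightarrow> ('x::real_vector) set \<Rightarrow> ('x \<Rightarrow> 'z) \<Rightarrow> bool" where
  "C_convex C S \<psi> \<longleftrightarrow> convex S \<and>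
     (\<forall>x1\<in>S. \<forall>x2\<in>S. \<forall>t::real. 0 < t \<and> t < 1 \<longrightarrow>
        (1 - t) *\<^sub>R \<psi> x1 + t *\<^sub>R \<psi> x2 \<in> (\<lambda>c. \<psi> (x1 + t *\<^sub>R (x2 - x1)) + c) ` C)"

definition setext :: "('z::real_vector) set \<Rightarrow> ('x::real_vector) set \<Rightarrow> ('x \<Rightarrow> 'z) \<Rightarrow> 'x \<Rightarrow> 'z set" where
  "setext C S \<psi> x = (if x \<in> S then (\<lambda>c. \<psi> x + c) ` C else {})"

definition set_ominus :: "('z::real_vector) set \<Rightarrow> 'z set \<Rightarrow> 'z set" where
  "set_ominus A B = {z. (\<lambda>b. b + z) ` B \<subseteq> A}"

definition recession :: "('z::real_vector) set \<Rightarrow> 'z set" where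
  "recession A = (if A = {} then {} else {z. (\<lambda>a. a + z) ` A \<subseteq> A})"

definition dir_deriv :: "('x::real_vector \<Rightarrow> ('z::{real_vector, topological_space}) set) \<Rightarrow> 'x \<Rightarrow> 'x \<Rightarrow> 'z set" where
  "dir_deriv f x u = (\<Inter>t0\<in>{t0::real. 0 < t0}.
      closure (convex hull (\<Union>t\<in>{t. 0 < t \<and> t < t0}.
         (\<lambda>z. (1 / t) *\<^sub>R z) ` set_ominus (f (x + t *\<^sub>R u)) (f x))))"

definition scalarization :: "('x \<Rightarrow> ('z::real_vector) set) \<Rightarrow> ('z \<Rightarrow> real) \<Rightarrow> 'x \<Rightarrow> ereal" where
  "scalarization f zs x = Inf ((\<lambda>z. ereal (- zs z)) ` f x)"

definition Eff_point :: "('z::real_vector) set \<Rightarrow> 'z \<Rightarrow> 'z set \<Rightarrow> bool" where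
  "Eff_point C y0 A \<longleftrightarrow> (\<forall>y\<in>A. y0 \<in> (\<lambda>c. y + c) ` C \<longrightarrow> y0 \<in> (\<lambda>c. y + c) ` (C \<inter> uminus ` C))"

definition minty_solution :: "('x::real_vector \<Rightarrow> ('z::{real_vector, topological_space}) set) \<Rightarrow> 'x \<Rightarrow> bool" where
  "minty_solution f x0 \<longleftrightarrow> (\<forall>x. f x \<noteq> f x0 \<longrightarrow> \<not> (dir_deriv f x (x0 - x) \<subseteq> recession (f x)))"

end

theory Submission
  imports Defs
begin

text \<open>
  For \<open>C\<close>-convex \<open>\<psi>\<close> the difference \<open>\<psi> y - \<psi> x\<close> always belongs to the radial derivative
  \<open>f'(x, y - x)\<close> of \<open>f = \<psi>\<^sup>C\<close>, while the recession cone of every nonempty value \<open>f x\<close> is \<open>C\<close>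
  itself (and \<open>f'(x, u)\<close> is the whole space when \<open>f x = \<emptyset>\<close>). So if the Minty inequality fails
  at \<open>x\<close>, then \<open>\<psi> x\<^sub>0 \<in> \<psi> x + C\<close>, and efficiency of \<open>\<psi> x\<^sub>0\<close> forces \<open>f x = f x\<^sub>0\<close>.

  Conversely, suppose \<open>\<psi> x\<^sub>0 \<in> \<psi> x + C\<close> but not \<open>\<psi> x \<in> \<psi> x\<^sub>0 + C\<close>, and let \<open>C\<close> be cut out by
  finitely many functionals \<open>m\<close>. Along the segment \<open>x\<^sub>0 + t(x - x\<^sub>0)\<close> each \<open>m \<circ> \<psi>\<close> is
  concave, upper semicontinuous at \<open>t = 0\<close> (this is the lower semicontinuity of the
  scalarization) and not larger at \<open>t = 0\<close> than at \<open>t = 1\<close>. Such a function attains its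
  maximum over \<open>[0, s]\<close> at \<open>s\<close> for some \<open>s > 0\<close>, and all these parameters can be chosen
  common to the finitely many \<open>m\<close>. At the point \<open>x' = x\<^sub>0 + s(x - x\<^sub>0)\<close> the map \<open>\<psi>\<close> is then
  \<open>C\<close>-nonincreasing in the direction of \<open>x\<^sub>0\<close>, so \<open>f'(x', x\<^sub>0 - x') \<subseteq> C = 0\<^sup>+f(x')\<close>, and
  \<open>s\<close> can be taken so that \<open>f x' \<noteq> f x\<^sub>0\<close>; this contradicts the Minty inequality.
\<close>

subsection \<open>Concave functions on the unit interval\<close>

lemma concave_on_unit_chord:
  fixes h :: "real \<Rightarrow> real"
  assumes "concave_on {0..1} h" "0 \<le> a" "a < t" "t < b" "b \<le> 1"
  shows "(b - t) * h a + (t - a) * h b \<le> (b - a) * h t"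
proof -
  define l where "l = (t - a) / (b - a)"
  have l: "0 \<le> l" "l \<le> 1" and l_diff: "(b - a) * l = t - a"
    using assms(2-5) by (auto simp: l_def field_simps)
  then have "(1 - l) * a + l * b = t"
    by (simp add: algebra_simps)
  then have "(1 - l) * h a + l * h b \<le> h t"
    using concave_onD[OF assms(1) l, of a b] assms(2-5) by simp
  then have "(b - a) * ((1 - l) * h a + l * h b) \<le> (b - a) * h t"
    using assms(3,4) by (intro mult_left_mono) auto
  moreover have "(b - a) * ((1 - l) * h a + l * h b) = ((b - a) * (1 - l)) * h a + ((b - a) * l) * h b"
    by (simp add: algebra_simps)
  moreover have "(b - a) * (1 - l) = b - t"
    using l_diff by (simp add: algebra_simps)
  ultimately show ?thesis
    using l_diff by simp
qed

lemma concave_on_unit_left_max_mono: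
  fixes h :: "real \<Rightarrow> real"
  assumes conc: "concave_on {0..1} h" and max: "\<forall>r\<in>{0..<s}. h r \<le> h s"
    and "0 \<le> t" "t \<le> s" "s \<le> 1"
  shows "\<forall>r\<in>{0..<t}. h r \<le> h t"
proof
  fix r :: real assume r: "r \<in> {0..<t}"
  show "h r \<le> h t"
  proof (cases "t = s")
    case False
    have "(s - t) * h r + (t - r) * h s \<le> (s - r) * h t"
      using concave_on_unit_chord[OF conc, of r t s] r False assms(4,5) by auto
    moreover have "(t - r) * h r \<le> (t - r) * h s"
      using max r assms(4) by (intro mult_left_mono) auto
    ultimately have "(s - r) * h r \<le> (s - r) * h t"
      unfolding left_diff_distrib by linarith
    then show ?thesis
      using r assms(4) by (simp add: mult_le_cancel_left)
  qed (use max r in auto)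
qed

lemma concave_on_unit_left_max_exists:
  fixes h :: "real \<Rightarrow> real"
  assumes conc: "concave_on {0..1} h" and "h 0 \<le> h 1"
    and usc: "\<And>e. e > 0 \<Longrightarrow> \<forall>\<^sub>F t in at_right 0. h t < h 0 + e"
  shows "\<exists>s\<in>{0<..1}. \<forall>r\<in>{0..<s}. h r \<le> h s"
proof (rule ccontr)
  assume none: "\<not> ?thesis"
  have decreasing: "h s < h t" if "0 < t" "t < s" "s \<le> 1" for s t
  proof (rule ccontr)
    assume "\<not> h s < h t"
    have "\<exists>r\<in>{0..<t}. h t < h r"
      using none that by (auto simp: not_le)
    then obtain r where r: "0 \<le> r" "r < t" "h t < h r"
      by auto
    have "(s - t) * h r + (t - r) * h s \<le> (s - r) * h t"
      using concave_on_unit_chord[OF conc, of r t s] r that by auto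
    moreover have "(s - t) * h t < (s - t) * h r"
      using r that by simp
    moreover have "(t - r) * h t \<le> (t - r) * h s"
      using r \<open>\<not> h s < h t\<close> by (intro mult_left_mono) auto
    ultimately show False
      unfolding left_diff_distrib by linarith
  qed
  have "h 1 < h (1/2)"
    using decreasing[of "1/2" 1] by simp
  then have "\<forall>\<^sub>F t in at_right 0. h t < h 0 + (h (1/2) - h 1)"
    by (intro usc) simp
  then obtain b where "b > 0" and b: "\<And>t. 0 < t \<Longrightarrow> t < b \<Longrightarrow> h t < h 0 + (h (1/2) - h 1)"
    unfolding eventually_at_right_field by auto
  define t where "t = min (b/2) (1/4)"
  have "0 < t" "t < b" "t < 1/2"
    using \<open>b > 0\<close> by (auto simp: t_def)
  then have "h t < h 0 + (h (1/2) - h 1)" "h (1/2) < h t"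
    using b decreasing[of t "1/2"] by auto
  then show False
    using assms(2) by linarith
qed

lemma concave_on_unit_left_max_one:
  fixes h :: "real \<Rightarrow> real"
  assumes conc: "concave_on {0..1} h" and max: "\<forall>r\<in>{0..<s}. h r \<le> h s"
    and s: "0 < s" "s \<le> 1" and "h s \<le> h 0" "h 0 \<le> h 1"
  shows "\<forall>r\<in>{0..<1}. h r \<le> h 1"
proof
  fix r :: real assume r: "r \<in> {0..<1}"
  have "h r \<le> h s"
  proof (cases "r \<le> s")
    case True
    then show ?thesis
      using max r by (cases "r = s") auto
  next
    case False
    have "(r - s) * h 0 + s * h r \<le> r * h s"
      using concave_on_unit_chord[OF conc, of 0 s r] s r False by auto
    moreover have "(r - s) * h s \<le> (r - s) * h 0"
      using False \<open>h s \<le> h 0\<close> by (intro mult_left_mono) auto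
    ultimately have "s * h r \<le> s * h s"
      unfolding left_diff_distrib by linarith
    then show ?thesis
      using s by simp
  qed
  then show "h r \<le> h 1"
    using assms(5,6) by linarith
qed

lemma concave_on_unit_common_left_max:
  fixes h :: "'i \<Rightarrow> real \<Rightarrow> real"
  assumes "finite I"
    and conc: "\<And>i. i \<in> I \<Longrightarrow> concave_on {0..1} (h i)"
    and le: "\<And>i. i \<in> I \<Longrightarrow> h i 0 \<le> h i 1"
    and usc: "\<And>i e. i \<in> I \<Longrightarrow> e > 0 \<Longrightarrow> \<forall>\<^sub>F t in at_right 0. h i t < h i 0 + e"
    and "j \<in> I" "h j 0 < h j 1"
  obtains s where "0 < s" "s \<le> 1" "\<And>i r. i \<in> I \<Longrightarrow> r \<in> {0..<s} \<Longrightarrow> h i r \<le> h i s"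
    and "\<exists>i\<in>I. h i 0 < h i s"
proof -
  have "\<forall>i\<in>I. \<exists>s\<in>{0<..1}. \<forall>r\<in>{0..<s}. h i r \<le> h i s"
  proof
    fix i assume i: "i \<in> I"
    show "\<exists>s\<in>{0<..1}. \<forall>r\<in>{0..<s}. h i r \<le> h i s"
      by (rule concave_on_unit_left_max_exists[OF conc[OF i] le[OF i] usc[OF i]])
  qed
  then obtain sf where sf: "\<And>i. i \<in> I \<Longrightarrow> sf i \<in> {0<..1} \<and> (\<forall>r\<in>{0..<sf i}. h i r \<le> h i (sf i))"
    by metis
  define s where "s = Min (insert 1 (sf ` I))"
  have "s \<in> insert 1 (sf ` I)"
    unfolding s_def using \<open>finite I\<close> by (intro Min_in) auto
  then have s: "0 < s" "s \<le> 1"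
    using sf by (auto simp: s_def \<open>finite I\<close>)
  have max: "\<forall>r\<in>{0..<s}. h i r \<le> h i s" if i: "i \<in> I" for i
  proof (rule concave_on_unit_left_max_mono[OF conc[OF i]])
    show "s \<le> sf i"
      unfolding s_def using \<open>finite I\<close> i by (intro Min_le) auto
  qed (use sf[OF i] s in auto)
  show ?thesis
  proof (cases "\<exists>i\<in>I. h i 0 < h i s")
    case True
    then show ?thesis
      using that s max by blast
  next
    case False
    have "\<forall>r\<in>{0..<1}. h i r \<le> h i 1" if i: "i \<in> I" for i
      using concave_on_unit_left_max_one[OF conc[OF i] max[OF i] s] False i le[OF i] by force
    then show ?thesis
      using that[of 1] assms(5,6) by auto
  qed
qed

subsection \<open>The set-valued extension\<close>

lemma setext_mem_iff:
  "x \<in> S \<Longrightarrow> y \<in> setext C S \<psi> x \<longleftrightarrow> y - \<psi> x \<in> C"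
  unfolding setext_def by (auto intro: image_eqI[where x = "y - \<psi> x"])

lemma recession_setext:
  assumes "convex_cone C" "x \<in> S"
  shows "recession (setext C S \<psi> x) = C"
proof -
  have \<psi>x: "\<psi> x \<in> setext C S \<psi> x"
    using assms by (simp add: setext_mem_iff convex_cone_iff)
  have "(\<lambda>a. a + z) ` setext C S \<psi> x \<subseteq> setext C S \<psi> x \<longleftrightarrow> z \<in> C" for z
  proof
    assume "(\<lambda>a. a + z) ` setext C S \<psi> x \<subseteq> setext C S \<psi> x"
    then have "\<psi> x + z \<in> setext C S \<psi> x"
      using \<psi>x by blast
    then show "z \<in> C"
      using assms(2) by (simp add: setext_mem_iff)
  next
    assume z: "z \<in> C"
    show "(\<lambda>a. a + z) ` setext C S \<psi> x \<subseteq> setext C S \<psi> x"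
    proof clarify
      fix a assume "a \<in> setext C S \<psi> x"
      then have "(a - \<psi> x) + z \<in> C"
        using assms z by (simp add: setext_mem_iff convex_cone_add)
      moreover have "(a - \<psi> x) + z = a + z - \<psi> x"
        by simp
      ultimately show "a + z \<in> setext C S \<psi> x"
        using setext_mem_iff[OF assms(2)] by metis
    qed
  qed
  then show ?thesis
    using \<psi>x unfolding recession_def by auto
qed

lemma setext_eq_iff:
  assumes "convex_cone C" "x \<in> S" "y \<in> S"
  shows "setext C S \<psi> x = setext C S \<psi> y \<longleftrightarrow> \<psi> x - \<psi> y \<in> C \<and> \<psi> y - \<psi> x \<in> C"
proof
  assume eq: "setext C S \<psi> x = setext C S \<psi> y"
  have "\<psi> x \<in> setext C S \<psi> x" "\<psi> y \<in> setext C S \<psi> y"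
    using assms by (simp_all add: setext_mem_iff convex_cone_iff)
  then have "\<psi> x \<in> setext C S \<psi> y" "\<psi> y \<in> setext C S \<psi> x"
    unfolding eq by simp_all
  then show "\<psi> x - \<psi> y \<in> C \<and> \<psi> y - \<psi> x \<in> C"
    using assms(2,3) by (simp add: setext_mem_iff)
next
  assume d: "\<psi> x - \<psi> y \<in> C \<and> \<psi> y - \<psi> x \<in> C"
  show "setext C S \<psi> x = setext C S \<psi> y"
    unfolding set_eq_iff setext_mem_iff[OF assms(2)] setext_mem_iff[OF assms(3)]
  proof
    fix z
    have "z - \<psi> y = (z - \<psi> x) + (\<psi> x - \<psi> y)" "z - \<psi> x = (z - \<psi> y) + (\<psi> y - \<psi> x)"
      by simp_all
    then show "z - \<psi> x \<in> C \<longleftrightarrow> z - \<psi> y \<in> C"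
      using d convex_cone_add[OF assms(1)] by metis
  qed
qed

lemma set_ominus_setext_iff:
  assumes "convex_cone C" "x \<in> S" "y \<in> S"
  shows "z \<in> set_ominus (setext C S \<psi> y) (setext C S \<psi> x) \<longleftrightarrow> \<psi> x + z - \<psi> y \<in> C"
proof
  have "\<psi> x \<in> setext C S \<psi> x"
    using assms by (simp add: setext_mem_iff convex_cone_iff)
  moreover assume "z \<in> set_ominus (setext C S \<psi> y) (setext C S \<psi> x)"
  ultimately have "\<psi> x + z \<in> setext C S \<psi> y"
    unfolding set_ominus_def by blast
  then show "\<psi> x + z - \<psi> y \<in> C"
    using assms(3) by (simp add: setext_mem_iff)
next
  assume z: "\<psi> x + z - \<psi> y \<in> C"
  have "b + z \<in> setext C S \<psi> y" if "b \<in> setext C S \<psi> x" for b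
  proof -
    have "(b - \<psi> x) + (\<psi> x + z - \<psi> y) \<in> C"
      using that z assms(2) by (intro convex_cone_add[OF assms(1)]) (simp_all add: setext_mem_iff)
    moreover have "(b - \<psi> x) + (\<psi> x + z - \<psi> y) = b + z - \<psi> y"
      by simp
    ultimately show ?thesis
      using setext_mem_iff[OF assms(3)] by metis
  qed
  then show "z \<in> set_ominus (setext C S \<psi> y) (setext C S \<psi> x)"
    unfolding set_ominus_def by blast
qed

lemma Eff_point_image_iff:
  "Eff_point C (\<psi> x0) (\<psi> ` S) \<longleftrightarrow> (\<forall>x\<in>S. \<psi> x0 - \<psi> x \<in> C \<longrightarrow> \<psi> x - \<psi> x0 \<in> C)"
proof -
  have translate: "v \<in> (\<lambda>c. y + c) ` A \<longleftrightarrow> v - y \<in> A" for v y :: 'a and A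
    by (auto intro: image_eqI[where x = "v - y"])
  have negate: "w \<in> uminus ` A \<longleftrightarrow> - w \<in> A" for w :: 'a and A
    by (auto intro: image_eqI[where x = "- w"])
  show ?thesis
    unfolding Eff_point_def translate Int_iff negate by auto
qed

subsection \<open>Radial derivatives\<close>

lemma dir_deriv_empty:
  assumes "f x = {}"
  shows "dir_deriv f x u = UNIV"
proof -
  have "(\<Union>t\<in>{t. 0 < t \<and> t < t0}. (\<lambda>z. (1 / t) *\<^sub>R z) ` set_ominus (f (x + t *\<^sub>R u)) (f x)) = UNIV"
    if "0 < t0" for t0
  proof -
    have "w \<in> (\<lambda>z. (1 / (t0/2)) *\<^sub>R z) ` set_ominus (f (x + (t0/2) *\<^sub>R u)) (f x)" for w
      using that by (intro image_eqI[where x = "(t0/2) *\<^sub>R w"]) (auto simp: assms set_ominus_def)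
    moreover have "t0/2 \<in> {t. 0 < t \<and> t < t0}"
      using that by simp
    ultimately show ?thesis
      by blast
  qed
  then show ?thesis
    unfolding dir_deriv_def by simp
qed

lemma mem_dir_derivI:
  assumes "\<forall>\<^sub>F t in at_right 0. t *\<^sub>R d \<in> set_ominus (f (x + t *\<^sub>R u)) (f x)"
  shows "d \<in> dir_deriv f x u"
  unfolding dir_deriv_def
proof (rule INT_I)
  fix t0 :: real assume "t0 \<in> {t0. 0 < t0}"
  obtain b where "b > 0" and b: "\<And>t. 0 < t \<Longrightarrow> t < b \<Longrightarrow> t *\<^sub>R d \<in> set_ominus (f (x + t *\<^sub>R u)) (f x)"
    using assms unfolding eventually_at_right_field by auto
  define t where "t = min t0 b / 2"
  have t: "0 < t" "t < t0" "t < b"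
    using \<open>t0 \<in> {t0. 0 < t0}\<close> \<open>b > 0\<close> by (auto simp: t_def)
  then have "d \<in> (\<lambda>z. (1 / t) *\<^sub>R z) ` set_ominus (f (x + t *\<^sub>R u)) (f x)"
    using b by (intro image_eqI[where x = "t *\<^sub>R d"]) auto
  then have "d \<in> (\<Union>t\<in>{t. 0 < t \<and> t < t0}. (\<lambda>z. (1 / t) *\<^sub>R z) ` set_ominus (f (x + t *\<^sub>R u)) (f x))"
    using t by blast
  then show "d \<in> closure (convex hull
      (\<Union>t\<in>{t. 0 < t \<and> t < t0}. (\<lambda>z. (1 / t) *\<^sub>R z) ` set_ominus (f (x + t *\<^sub>R u)) (f x)))"
    by (meson closure_subset hull_inc subsetD)
qed

lemma dir_deriv_subset:
  assumes "closed K" "convex_cone K"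
    and "\<forall>\<^sub>F t in at_right 0. set_ominus (f (x + t *\<^sub>R u)) (f x) \<subseteq> K"
  shows "dir_deriv f x u \<subseteq> K"
proof -
  obtain b where "b > 0" and b: "\<And>t. 0 < t \<Longrightarrow> t < b \<Longrightarrow> set_ominus (f (x + t *\<^sub>R u)) (f x) \<subseteq> K"
    using assms(3) unfolding eventually_at_right_field by auto
  let ?U = "\<Union>t\<in>{t. 0 < t \<and> t < b}. (\<lambda>z. (1 / t) *\<^sub>R z) ` set_ominus (f (x + t *\<^sub>R u)) (f x)"
  have "?U \<subseteq> K"
    using b assms(2) by (auto intro!: convex_cone_scaleR)
  then have "closure (convex hull ?U) \<subseteq> K"
    using assms(1,2) by (intro closure_minimal hull_minimal) (auto simp: convex_cone_def)
  moreover have "dir_deriv f x u \<subseteq> closure (convex hull ?U)"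
    unfolding dir_deriv_def using \<open>b > 0\<close> by (intro Inter_lower) auto
  ultimately show ?thesis
    by blast
qed

subsection \<open>\<open>C\<close>-convex maps\<close>

lemma C_convex_segment_mem:
  assumes "C_convex C S \<psi>" "x \<in> S" "y \<in> S" "0 \<le> t" "t \<le> 1"
  shows "x + t *\<^sub>R (y - x) \<in> S"
proof -
  have "(1 - t) *\<^sub>R x + t *\<^sub>R y \<in> S"
    using assms unfolding C_convex_def convex_alt by blast
  then show ?thesis
    by (simp add: algebra_simps)
qed

lemma C_convexD:
  assumes "C_convex C S \<psi>" "x \<in> S" "y \<in> S" "0 < t" "t < 1"
  shows "(1 - t) *\<^sub>R \<psi> x + t *\<^sub>R \<psi> y - \<psi> (x + t *\<^sub>R (y - x)) \<in> C"
  using assms unfolding C_convex_def by force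

lemma C_convex_diff_mem_dir_deriv:
  fixes \<psi> :: "'x::real_vector \<Rightarrow> 'z::{real_vector, topological_space}"
  assumes "convex_cone C" "C_convex C S \<psi>" "x \<in> S" "y \<in> S"
  shows "\<psi> y - \<psi> x \<in> dir_deriv (setext C S \<psi>) x (y - x)"
proof (rule mem_dir_derivI)
  have "t *\<^sub>R (\<psi> y - \<psi> x) \<in> set_ominus (setext C S \<psi> (x + t *\<^sub>R (y - x))) (setext C S \<psi> x)"
    if "0 < t" "t < 1" for t
  proof -
    have "\<psi> x + t *\<^sub>R (\<psi> y - \<psi> x) - \<psi> (x + t *\<^sub>R (y - x)) \<in> C"
      using C_convexD[OF assms(2-4) that] by (simp add: algebra_simps)
    then show ?thesis
      using set_ominus_setext_iff[OF assms(1,3) C_convex_segment_mem[OF assms(2-4)]] that by simp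
  qed
  then show "\<forall>\<^sub>F t in at_right 0.
      t *\<^sub>R (\<psi> y - \<psi> x) \<in> set_ominus (setext C S \<psi> (x + t *\<^sub>R (y - x))) (setext C S \<psi> x)"
    unfolding eventually_at_right_field by (intro exI[of _ 1]) auto
qed

lemma dir_deriv_setext_subset:
  fixes \<psi> :: "'x::real_vector \<Rightarrow> 'z::{real_vector, topological_space}"
  assumes "closed C" "convex_cone C" "x \<in> S"
    and "\<forall>\<^sub>F t in at_right 0. x + t *\<^sub>R u \<in> S \<and> \<psi> (x + t *\<^sub>R u) - \<psi> x \<in> C"
  shows "dir_deriv (setext C S \<psi>) x u \<subseteq> C"
proof (rule dir_deriv_subset[OF assms(1,2)])
  show "\<forall>\<^sub>F t in at_right 0. set_ominus (setext C S \<psi> (x + t *\<^sub>R u)) (setext C S \<psi> x) \<subseteq> C"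
    using assms(4)
  proof (rule eventually_mono)
    fix t assume t: "x + t *\<^sub>R u \<in> S \<and> \<psi> (x + t *\<^sub>R u) - \<psi> x \<in> C"
    show "set_ominus (setext C S \<psi> (x + t *\<^sub>R u)) (setext C S \<psi> x) \<subseteq> C"
    proof
      fix z assume "z \<in> set_ominus (setext C S \<psi> (x + t *\<^sub>R u)) (setext C S \<psi> x)"
      then have "\<psi> x + z - \<psi> (x + t *\<^sub>R u) \<in> C"
        using set_ominus_setext_iff[OF assms(2,3)] t by blast
      moreover have "z = (\<psi> x + z - \<psi> (x + t *\<^sub>R u)) + (\<psi> (x + t *\<^sub>R u) - \<psi> x)"
        by simp
      ultimately show "z \<in> C"
        using t convex_cone_add[OF assms(2)] by metis
    qed
  qed
qed

lemma Eff_point_imp_minty_solution: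
  fixes \<psi> :: "'x::real_vector \<Rightarrow> 'z::{real_vector, topological_space}"
  assumes "convex_cone C" "C_convex C S \<psi>" "x0 \<in> S" "Eff_point C (\<psi> x0) (\<psi> ` S)"
  shows "minty_solution (setext C S \<psi>) x0"
  unfolding minty_solution_def
proof (intro allI impI)
  fix x assume ne: "setext C S \<psi> x \<noteq> setext C S \<psi> x0"
  show "\<not> dir_deriv (setext C S \<psi>) x (x0 - x) \<subseteq> recession (setext C S \<psi> x)"
  proof (cases "x \<in> S")
    case False
    then have "setext C S \<psi> x = {}"
      by (simp add: setext_def)
    then show ?thesis
      by (simp add: dir_deriv_empty recession_def)
  next
    case True
    have "\<psi> x0 - \<psi> x \<notin> C"
    proof
      assume "\<psi> x0 - \<psi> x \<in> C"
      moreover from this have "\<psi> x - \<psi> x0 \<in> C"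
        using assms(4) True by (simp add: Eff_point_image_iff)
      ultimately show False
        using ne setext_eq_iff[OF assms(1) True assms(3)] by blast
    qed
    then show ?thesis
      using C_convex_diff_mem_dir_deriv[OF assms(1,2) True assms(3)]
        recession_setext[OF assms(1) True] by blast
  qed
qed

subsection \<open>Scalarization by a polyhedral cone\<close>

lemma polar_cone_imp_linear: "m \<in> polar_cone C \<Longrightarrow> linear m"
  unfolding polar_cone_def dual_space_def by auto

lemma polyhedral_coneE:
  assumes "polyhedral_cone C"
  obtains M where "finite M" "M \<subseteq> polar_cone C" "\<And>z. z \<in> C \<longleftrightarrow> (\<forall>m\<in>M. m z \<le> 0)"
proof -
  obtain M where M: "finite M" "M \<subseteq> dual_space" "C = (\<Inter>m\<in>M. {z. 0 \<le> - m z})"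
    using assms unfolding polyhedral_cone_def by blast
  have mem: "z \<in> C \<longleftrightarrow> (\<forall>m\<in>M. m z \<le> 0)" for z
    using M(3) by auto
  moreover have "M \<subseteq> polar_cone C"
    using M(2) mem unfolding polar_cone_def by auto
  ultimately show ?thesis
    using that M(1) by blast
qed

lemma scalarization_setext:
  assumes "x \<in> S" "m \<in> polar_cone C" "0 \<in> C"
  shows "scalarization (setext C S \<psi>) m x = ereal (- m (\<psi> x))"
proof -
  have lin: "linear m"
    using assms(2) by (rule polar_cone_imp_linear)
  have "scalarization (setext C S \<psi>) m x = (INF c\<in>C. ereal (- m (\<psi> x + c)))"
    unfolding scalarization_def setext_def using assms(1) by (simp add: image_image)
  also have "\<dots> = ereal (- m (\<psi> x))"
  proof (rule antisym)
    show "(INF c\<in>C. ereal (- m (\<psi> x + c))) \<le> ereal (- m (\<psi> x))"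
      using assms(3) by (intro INF_lower2[of 0]) (auto simp: linear_0[OF lin])
    show "ereal (- m (\<psi> x)) \<le> (INF c\<in>C. ereal (- m (\<psi> x + c)))"
      using assms(2) by (intro INF_greatest) (auto simp: linear_add[OF lin] polar_cone_def)
  qed
  finally show ?thesis .
qed

definition radial_scalarization ::
    "('x::real_vector \<Rightarrow> ('z::real_vector) set) \<Rightarrow> ('z \<Rightarrow> real) \<Rightarrow> 'x \<Rightarrow> 'x \<Rightarrow> real \<Rightarrow> ereal" where
  "radial_scalarization f m x0 x =
     (\<lambda>t. if 0 \<le> t \<and> t \<le> 1 then scalarization f m (x0 + t *\<^sub>R (x - x0)) else \<infinity>)"

lemma C_convex_concave_on_segment:
  assumes "C_convex C S \<psi>" "m \<in> polar_cone C" "x \<in> S" "y \<in> S"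
  shows "concave_on {0..1} (\<lambda>t. m (\<psi> (x + t *\<^sub>R (y - x))))"
  unfolding concave_on_def
proof (rule convex_onI)
  fix l a b :: real assume l: "0 < l" "l < 1" and ab: "a \<in> {0..1}" "b \<in> {0..1}"
  let ?p = "\<lambda>r::real. x + r *\<^sub>R (y - x)"
  have pS: "?p a \<in> S" "?p b \<in> S"
    using C_convex_segment_mem[OF assms(1,3,4)] ab by auto
  have eq: "?p a + l *\<^sub>R (?p b - ?p a) = ?p ((1 - l) *\<^sub>R a + l *\<^sub>R b)"
    by (simp add: algebra_simps)
  have "(1 - l) *\<^sub>R \<psi> (?p a) + l *\<^sub>R \<psi> (?p b) - \<psi> (?p ((1 - l) *\<^sub>R a + l *\<^sub>R b)) \<in> C"
    using C_convexD[OF assms(1) pS l] unfolding eq .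
  then have "m ((1 - l) *\<^sub>R \<psi> (?p a) + l *\<^sub>R \<psi> (?p b) - \<psi> (?p ((1 - l) *\<^sub>R a + l *\<^sub>R b))) \<le> 0"
    using assms(2) unfolding polar_cone_def by blast
  then show "- m (\<psi> (?p ((1 - l) *\<^sub>R a + l *\<^sub>R b))) \<le> (1 - l) * - m (\<psi> (?p a)) + l * - m (\<psi> (?p b))"
    using polar_cone_imp_linear[OF assms(2)]
    by (simp add: linear_diff linear_add linear_scale)
qed simp

lemma scalarization_lsc_imp_usc:
  assumes "0 \<in> C" "m \<in> polar_cone C" "C_convex C S \<psi>" "x0 \<in> S" "x \<in> S"
    and lsc: "m \<noteq> (\<lambda>_. 0) \<Longrightarrow> radial_scalarization (setext C S \<psi>) m x0 x 0
                \<le> Liminf (at 0) (radial_scalarization (setext C S \<psi>) m x0 x)"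
    and "e > 0"
  shows "\<forall>\<^sub>F t in at_right 0. m (\<psi> (x0 + t *\<^sub>R (x - x0))) < m (\<psi> x0) + e"
proof (cases "m = (\<lambda>_. 0)")
  case True
  then show ?thesis
    using \<open>e > 0\<close> by simp
next
  case False
  define g where "g = radial_scalarization (setext C S \<psi>) m x0 x"
  have g: "g t = ereal (- m (\<psi> (x0 + t *\<^sub>R (x - x0))))" if "0 \<le> t" "t \<le> 1" for t
    using that scalarization_setext[OF C_convex_segment_mem[OF assms(3-5) that] assms(2,1)]
    by (simp add: g_def radial_scalarization_def)
  have "ereal (- m (\<psi> x0) - e) < g 0"
    using g[of 0] \<open>e > 0\<close> by simp
  then have "\<forall>\<^sub>F t in at 0. ereal (- m (\<psi> x0) - e) < g t"
    using lsc[OF False] le_Liminf_iff unfolding g_def by blast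
  then have "\<forall>\<^sub>F t in at_right 0. ereal (- m (\<psi> x0) - e) < g t"
    by (rule filter_leD[OF at_le[OF subset_UNIV]])
  then obtain b where "b > 0" and b: "\<And>t. 0 < t \<Longrightarrow> t < b \<Longrightarrow> ereal (- m (\<psi> x0) - e) < g t"
    unfolding eventually_at_right_field by auto
  show ?thesis
    unfolding eventually_at_right_field
  proof (intro exI[of _ "min b 1"] conjI allI impI)
    fix t :: real assume "0 < t" "t < min b 1"
    then show "m (\<psi> (x0 + t *\<^sub>R (x - x0))) < m (\<psi> x0) + e"
      using b[of t] g[of t] by simp
  qed (use \<open>b > 0\<close> in simp)
qed

lemma C_least_segment_point:
  fixes \<psi> :: "'x::real_vector \<Rightarrow> 'z::{real_vector, topological_space}"
  assumes "convex_cone C" "polyhedral_cone C" "C_convex C S \<psi>" "x0 \<in> S" "x \<in> S"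
    and lsc: "\<And>m. m \<in> polar_cone C \<Longrightarrow> m \<noteq> (\<lambda>_. 0) \<Longrightarrow>
        radial_scalarization (setext C S \<psi>) m x0 x 0
          \<le> Liminf (at 0) (radial_scalarization (setext C S \<psi>) m x0 x)"
    and below: "\<psi> x0 - \<psi> x \<in> C" and not_above: "\<psi> x - \<psi> x0 \<notin> C"
  obtains s where "0 < s" "s \<le> 1"
    "\<And>r. r \<in> {0..<s} \<Longrightarrow> \<psi> (x0 + r *\<^sub>R (x - x0)) - \<psi> (x0 + s *\<^sub>R (x - x0)) \<in> C"
    "\<psi> (x0 + s *\<^sub>R (x - x0)) - \<psi> x0 \<notin> C"
proof -
  obtain M where M: "finite M" "M \<subseteq> polar_cone C" and memC: "\<And>z. z \<in> C \<longleftrightarrow> (\<forall>m\<in>M. m z \<le> 0)"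
    using polyhedral_coneE[OF assms(2)] by metis
  define h where "h m t = m (\<psi> (x0 + t *\<^sub>R (x - x0)))" for m :: "'z \<Rightarrow> real" and t :: real
  have h_diff: "h m t - h m r = m (\<psi> (x0 + t *\<^sub>R (x - x0)) - \<psi> (x0 + r *\<^sub>R (x - x0)))"
    if "m \<in> M" for m t r
    using polar_cone_imp_linear[of m C] that M(2) by (auto simp: h_def linear_diff)
  have conc: "concave_on {0..1} (h m)" if "m \<in> M" for m
    unfolding h_def using C_convex_concave_on_segment[OF assms(3) _ assms(4,5)] that M(2) by blast
  have le: "h m 0 \<le> h m 1" if "m \<in> M" for m
    using h_diff[OF that, of 0 1] below memC that by force
  have usc: "\<forall>\<^sub>F t in at_right 0. h m t < h m 0 + e" if "m \<in> M" "e > 0" for m e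
    unfolding h_def using scalarization_lsc_imp_usc[OF _ _ assms(3-5) lsc] that M(2) assms(1)
    by (auto simp: convex_cone_iff)
  obtain j where j: "j \<in> M" "\<not> j (\<psi> x - \<psi> x0) \<le> 0"
    using not_above memC by blast
  then have "h j 0 < h j 1"
    using h_diff[OF j(1), of 1 0] by simp
  then obtain s where s: "0 < s" "s \<le> 1"
    and left_max: "\<And>m r. m \<in> M \<Longrightarrow> r \<in> {0..<s} \<Longrightarrow> h m r \<le> h m s"
    and "\<exists>i\<in>M. h i 0 < h i s"
    using concave_on_unit_common_left_max[of M h, OF M(1) conc le usc j(1)] by blast
  show ?thesis
  proof (rule that[OF s])
    show "\<psi> (x0 + r *\<^sub>R (x - x0)) - \<psi> (x0 + s *\<^sub>R (x - x0)) \<in> C" if r: "r \<in> {0..<s}" for r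
      unfolding memC
    proof
      fix m assume m: "m \<in> M"
      show "m (\<psi> (x0 + r *\<^sub>R (x - x0)) - \<psi> (x0 + s *\<^sub>R (x - x0))) \<le> 0"
        using left_max[OF m r] h_diff[OF m, of r s] by simp
    qed
    show "\<psi> (x0 + s *\<^sub>R (x - x0)) - \<psi> x0 \<notin> C"
      unfolding memC using \<open>\<exists>i\<in>M. h i 0 < h i s\<close> h_diff[of _ s 0] by force
  qed
qed

lemma minty_solution_imp_Eff_point:
  fixes \<psi> :: "'x::real_vector \<Rightarrow> 'z::{real_vector, topological_space}"
  assumes "closed C" "convex_cone C" "polyhedral_cone C" "C_convex C S \<psi>" "x0 \<in> S"
    and lsc: "\<And>x m. m \<in> polar_cone C \<Longrightarrow> m \<noteq> (\<lambda>_. 0) \<Longrightarrow>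
        radial_scalarization (setext C S \<psi>) m x0 x 0
          \<le> Liminf (at 0) (radial_scalarization (setext C S \<psi>) m x0 x)"
    and minty: "minty_solution (setext C S \<psi>) x0"
  shows "Eff_point C (\<psi> x0) (\<psi> ` S)"
  unfolding Eff_point_image_iff
proof (intro ballI impI, rule ccontr)
  fix x assume x: "x \<in> S" and "\<psi> x0 - \<psi> x \<in> C" "\<psi> x - \<psi> x0 \<notin> C"
  then obtain s where s: "0 < s" "s \<le> 1"
    and least: "\<And>r. r \<in> {0..<s} \<Longrightarrow> \<psi> (x0 + r *\<^sub>R (x - x0)) - \<psi> (x0 + s *\<^sub>R (x - x0)) \<in> C"
    and new: "\<psi> (x0 + s *\<^sub>R (x - x0)) - \<psi> x0 \<notin> C"
    using C_least_segment_point[OF assms(2-5) x lsc] by blast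
  define x' where "x' = x0 + s *\<^sub>R (x - x0)"
  have x'S: "x' \<in> S"
    unfolding x'_def using C_convex_segment_mem[OF assms(4,5) x] s by simp
  have ne: "setext C S \<psi> x' \<noteq> setext C S \<psi> x0"
    using new setext_eq_iff[OF assms(2) x'S assms(5)] by (simp add: x'_def)
  have "x' + t *\<^sub>R (x0 - x') \<in> S \<and> \<psi> (x' + t *\<^sub>R (x0 - x')) - \<psi> x' \<in> C" if "0 < t" "t < 1" for t
  proof -
    have eq: "x' + t *\<^sub>R (x0 - x') = x0 + ((1 - t) * s) *\<^sub>R (x - x0)"
      by (simp add: x'_def algebra_simps)
    have r: "(1 - t) * s \<in> {0..<s}" "0 \<le> (1 - t) * s" "(1 - t) * s \<le> 1"
      using that s by (auto simp: mult_le_one)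
    show ?thesis
      unfolding eq using C_convex_segment_mem[OF assms(4,5) x r(2,3)] least[OF r(1)]
      unfolding x'_def by blast
  qed
  then have "\<forall>\<^sub>F t in at_right 0. x' + t *\<^sub>R (x0 - x') \<in> S \<and> \<psi> (x' + t *\<^sub>R (x0 - x')) - \<psi> x' \<in> C"
    unfolding eventually_at_right_field by (intro exI[of _ 1]) auto
  then have "dir_deriv (setext C S \<psi>) x' (x0 - x') \<subseteq> C"
    by (rule dir_deriv_setext_subset[OF assms(1,2) x'S])
  then show False
    using minty ne recession_setext[OF assms(2) x'S] unfolding minty_solution_def by blast
qed

theorem mainTheorem5:
  fixes C :: "('z::{real_vector, t2_space}) set"
    and S :: "('x::real_vector) set"
    and \<psi> :: "'x \<Rightarrow> 'z"
    and x0 :: 'x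
  assumes lcs: "locally_convex_tvs TYPE('z)"
    and C_closed: "closed C" and C_convex: "convex C" and C_cone: "cone C" and C_0: "0 \<in> C"
    and polar_nontriv: "\<exists>zs\<in>polar_cone C. zs \<noteq> (\<lambda>_. 0)"
    and C_poly: "polyhedral_cone C"
    and psi_conv: "C_convex C S \<psi>"
    and x0S: "x0 \<in> S"
    and lsc: "\<And>x zs. zs \<in> polar_cone C \<Longrightarrow> zs \<noteq> (\<lambda>_. 0) \<Longrightarrow>
        (let g = (\<lambda>t::real. if 0 \<le> t \<and> t \<le> 1
                      then scalarization (setext C S \<psi>) zs (x0 + t *\<^sub>R (x - x0)) else \<infinity>)
         in g 0 \<le> Liminf (at 0) g)"
  shows "minty_solution (setext C S \<psi>) x0 \<longleftrightarrow> Eff_point C (\<psi> x0) (\<psi> ` S)"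
proof -
  have cone: "convex_cone C"
    using C_convex C_cone C_0 convex_cone[of C] by (simp add: convex_cone_iff)
  have "radial_scalarization (setext C S \<psi>) zs x0 x 0
      \<le> Liminf (at 0) (radial_scalarization (setext C S \<psi>) zs x0 x)"
    if "zs \<in> polar_cone C" "zs \<noteq> (\<lambda>_. 0)" for x zs
    using lsc[OF that] unfolding radial_scalarization_def Let_def .
  then show ?thesis
    using Eff_point_imp_minty_solution[OF cone psi_conv x0S]
      minty_solution_imp_Eff_point[OF C_closed cone C_poly psi_conv x0S] by blast
qed

end
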